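(* Let $p\ge2$ and $n,\ell,t$ be positive integers. Every $t$-tandem-duplication-correcting code $\mathcal{C}\subseteq\mathbb{Z}_p^n$ with respect to duplication length $\ell$ satisfies $$|\mathcal{C}|\le\frac{t!}{(n+(t-1)\ell)^t}\cdot\frac{p^{n+t(\ell+1)}}{(p-1)^t}.$$
   Context: $\mathbb{Z}_p=\{0,1,\dots,p-1\}$ with arithmetic mod $p$. For a word $\mathbf{x}$ over $\mathbb{Z}_p$ and $0\le i\le|\mathbf{x}|-\ell$, write $\mathbf{x}=\mathbf{u}\mathbf{v}\mathbf{w}$ with $|\mathbf{u}|=i$, $|\mathbf{v}|=\ell$; the tandem duplication of length $\ell$ at position $i$ produces $\mathbf{u}\mathbf{v}\mathbf{v}\mathbf{w}$. The ball $B_t^{\tau_\ell}(\mathbf{x})$ is the set of words obtainable from $\mathbf{x}$ by at most $t$ successive tandem duplications of length $\ell$. A code $\mathcal{C}\subseteq\mathbb{Z}_p^n$ is $t$-tandem-duplication-correcting (duplication length $\ell$) if $B_t^{\tau_\ell}(\mathbf{c})\cap B_t^{\tau_\ell}(\mathbf{c}')=\emptyset$ for all distinct $\mathbf{c},\mathbf{c}'\in\mathcal{C}$. *)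

theory Defs
  imports Complex_Main
begin

definition words :: "nat \<Rightarrow> nat \<Rightarrow> nat list set" where
  "words p n = {x. length x = n \<and> (\<forall>a\<in>set x. a < p)}"

text \<open>Tandem duplication of length l at position i: x = u v w with |u| = i, |v| = l,
  result u v v w. Only defined (used) when i + l \<le> length x.\<close>
definition tdup :: "nat \<Rightarrow> nat \<Rightarrow> 'a list \<Rightarrow> 'a list" where
  "tdup l i x = take i x @ take l (drop i x) @ take l (drop i x) @ drop (i + l) x"

definition tdup_step :: "nat \<Rightarrow> 'a list \<Rightarrow> 'a list \<Rightarrow> bool" where
  "tdup_step l x y \<longleftrightarrow> (\<exists>i. i + l \<le> length x \<and> y = tdup l i x)"

definition tdup_ball :: "nat \<Rightarrow> nat \<Rightarrow> 'a list \<Rightarrow> 'a list set" where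
  "tdup_ball l t x = {y. \<exists>k\<le>t. ((tdup_step l) ^^ k) x y}"

definition tdc_code :: "nat \<Rightarrow> nat \<Rightarrow> nat \<Rightarrow> nat \<Rightarrow> nat list set \<Rightarrow> bool" where
  "tdc_code p n l t C \<longleftrightarrow> C \<subseteq> words p n \<and>
     (\<forall>c\<in>C. \<forall>c'\<in>C. c \<noteq> c' \<longrightarrow> tdup_ball l t c \<inter> tdup_ball l t c' = {})"

end

theory Submission
  imports Defs
begin

(* Write D x for the sequence of differences x_{j+l} - x_j in Z_p. The map x |-> (first l letters
   of x, D x) is injective on words of a fixed length, and a tandem duplication of length l at
   position i acts on D x by inserting l zeros at position i, so it preserves the number w of
   nonzero entries of D x. Distributing t blocks of l zeros over the w + 1 gaps around these
   entries yields at least C(w + t, t) distinct sequences; hence a codeword c with weight w has at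
   least C(w + t, t) descendants after exactly t duplications. For distinct codewords these sets
   are disjoint, and they all lie among the p^l C(M, w) (p - 1)^w words of length n + t l whose
   difference sequence has weight w, where M = n + (t - 1) l. Multiplying by
   C(M + t, t) (p - 1)^t, using C(M + t, w + t) C(w + t, t) = C(M + t, t) C(M, w) and summing over
   w with the binomial theorem gives |C| C(M + t, t) (p - 1)^t <= p^(n + t (l + 1)); finally
   M^t <= t! C(M + t, t). *)

(* (a + p - b) mod p is a - b in Z_p for b < p; adding p avoids truncated subtraction. *)
definition diff_mod :: "nat \<Rightarrow> nat \<Rightarrow> nat list \<Rightarrow> nat list" where
  "diff_mod p l x = map (\<lambda>j. (x ! (j + l) + p - x ! j) mod p) [0..<length x - l]"

definition hamming_weight :: "nat list \<Rightarrow> nat" where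
  "hamming_weight d = length (filter (\<lambda>a. a \<noteq> 0) d)"

definition insert_zeros :: "nat \<Rightarrow> nat \<Rightarrow> nat list \<Rightarrow> nat list" where
  "insert_zeros l i d = take i d @ replicate l 0 @ drop i d"

definition zero_insertion :: "nat \<Rightarrow> nat list \<Rightarrow> nat list \<Rightarrow> bool" where
  "zero_insertion l d e \<longleftrightarrow> (\<exists>i \<le> length d. e = insert_zeros l i d)"

lemma hamming_weight_Nil [simp]: "hamming_weight [] = 0"
  and hamming_weight_Cons [simp]:
    "hamming_weight (a # x) = (if a = 0 then hamming_weight x else Suc (hamming_weight x))"
  by (simp_all add: hamming_weight_def)

lemma length_tdup: "i + l \<le> length x \<Longrightarrow> length (tdup l i x) = length x + l"
  by (simp add: tdup_def)

lemma nth_tdup: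
  assumes "i + l \<le> length x" and "k < length x + l"
  shows "tdup l i x ! k = (if k < i + l then x ! k else x ! (k - l))"
  using assms by (auto simp: tdup_def nth_append min_def add.commute intro!: arg_cong[where f = "(!) x"])

lemma set_tdup_subset: "set (tdup l i x) \<subseteq> set x"
  unfolding tdup_def by (auto dest: in_set_takeD in_set_dropD)

lemma length_diff_mod [simp]: "length (diff_mod p l x) = length x - l"
  by (simp add: diff_mod_def)

lemma nth_diff_mod: "j < length x - l \<Longrightarrow> diff_mod p l x ! j = (x ! (j + l) + p - x ! j) mod p"
  by (simp add: diff_mod_def)

lemma diff_mod_tdup:
  assumes "i + l \<le> length x"
  shows "diff_mod p l (tdup l i x) = insert_zeros l i (diff_mod p l x)"
proof (rule nth_equalityI)
  show "length (diff_mod p l (tdup l i x)) = length (insert_zeros l i (diff_mod p l x))"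
    using assms by (simp add: diff_mod_def insert_zeros_def length_tdup)
next
  fix j assume "j < length (diff_mod p l (tdup l i x))"
  then have j: "j < length x" using assms by (simp add: diff_mod_def length_tdup)
  have "diff_mod p l (tdup l i x) ! j = (tdup l i x ! (j + l) + p - tdup l i x ! j) mod p"
    using j assms by (simp add: nth_diff_mod length_tdup)
  also have "\<dots> = insert_zeros l i (diff_mod p l x) ! j"
  proof -
    consider "j < i" | "i \<le> j" "j < i + l" | "i + l \<le> j" by linarith
    then show ?thesis
      by cases (use j assms in \<open>auto simp: nth_tdup insert_zeros_def nth_append nth_diff_mod min_def\<close>)
  qed
  finally show "diff_mod p l (tdup l i x) ! j = insert_zeros l i (diff_mod p l x) ! j" .
qed

lemma hamming_weight_insert_zeros: "hamming_weight (insert_zeros l i d) = hamming_weight d"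
proof -
  have "hamming_weight (take i d) + hamming_weight (drop i d) = hamming_weight d"
    unfolding hamming_weight_def by (metis append_take_drop_id filter_append length_append)
  then show ?thesis by (simp add: hamming_weight_def insert_zeros_def)
qed

lemma relpowp_tdup_step_length: "(tdup_step l ^^ k) x y \<Longrightarrow> length y = length x + k * l"
  by (induction k arbitrary: y) (auto simp: tdup_step_def length_tdup)

lemma relpowp_tdup_step_set: "(tdup_step l ^^ k) x y \<Longrightarrow> set y \<subseteq> set x"
  by (induction k arbitrary: y) (force simp: tdup_step_def dest: set_tdup_subset[THEN subsetD])+

lemma relpowp_tdup_step_words: "(tdup_step l ^^ k) x y \<Longrightarrow> x \<in> words p n \<Longrightarrow> y \<in> words p (n + k * l)"
  using relpowp_tdup_step_length relpowp_tdup_step_set unfolding words_def by fastforce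

lemma relpowp_tdup_step_weight:
  "(tdup_step l ^^ k) x y \<Longrightarrow> hamming_weight (diff_mod p l y) = hamming_weight (diff_mod p l x)"
  by (induction k arbitrary: y) (auto simp: tdup_step_def diff_mod_tdup hamming_weight_insert_zeros)

lemma finite_relpowp_tdup_step: "finite {y. (tdup_step l ^^ k) x y}"
proof (rule finite_subset)
  show "{y. (tdup_step l ^^ k) x y} \<subseteq> {y. set y \<subseteq> set x \<and> length y = length x + k * l}"
    using relpowp_tdup_step_length relpowp_tdup_step_set by blast
qed (simp add: finite_lists_length_eq)

lemma relpowp_zero_insertion_lift:
  assumes "(zero_insertion l ^^ k) (diff_mod p l x) e" and "l \<le> length x"
  shows "\<exists>y. (tdup_step l ^^ k) x y \<and> diff_mod p l y = e"
  using assms(1)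
proof (induction k arbitrary: e)
  case (Suc k)
  then obtain e' where e': "(zero_insertion l ^^ k) (diff_mod p l x) e'" and "zero_insertion l e' e"
    by (auto elim: relpowp_Suc_E)
  then obtain i where i: "i \<le> length e'" "e = insert_zeros l i e'"
    by (auto simp: zero_insertion_def)
  obtain y where y: "(tdup_step l ^^ k) x y" "diff_mod p l y = e'"
    using Suc.IH[OF e'] by blast
  have "i + l \<le> length y"
    using i(1) y assms(2) relpowp_tdup_step_length[OF y(1)] by auto
  then have "tdup_step l y (tdup l i y)" and "diff_mod p l (tdup l i y) = e"
    using diff_mod_tdup y(2) i(2) by (auto simp: tdup_step_def)
  then show ?case using y(1) by (blast intro: relpowp_Suc_I)
qed auto

lemma relpowp_zero_insertion_length_set:
  "(zero_insertion l ^^ k) d e \<Longrightarrow> length e = length d + k * l \<and> set e \<subseteq> insert 0 (set d)"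
proof (induction k arbitrary: e)
  case (Suc k)
  then obtain e' where e': "(zero_insertion l ^^ k) d e'" and "zero_insertion l e' e"
    by (auto elim: relpowp_Suc_E)
  then obtain i where "i \<le> length e'" "e = insert_zeros l i e'"
    by (auto simp: zero_insertion_def)
  then show ?case
    using Suc.IH[OF e'] set_take_subset[of i e'] set_drop_subset[of i e'] by (auto simp: insert_zeros_def)
qed auto

lemma finite_relpowp_zero_insertion: "finite {e. (zero_insertion l ^^ k) d e}"
proof (rule finite_subset)
  show "{e. (zero_insertion l ^^ k) d e} \<subseteq> {e. set e \<subseteq> insert 0 (set d) \<and> length e = length d + k * l}"
    using relpowp_zero_insertion_length_set by blast
qed (simp add: finite_lists_length_eq)

lemma relpowp_zero_insertion_Cons:
  "(zero_insertion l ^^ k) d e \<Longrightarrow> (zero_insertion l ^^ k) (a # d) (a # e)"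
proof (induction k arbitrary: e)
  case (Suc k)
  then obtain e' where e': "(zero_insertion l ^^ k) d e'" and "zero_insertion l e' e"
    by (auto elim: relpowp_Suc_E)
  then obtain i where i: "i \<le> length e'" "e = insert_zeros l i e'"
    by (auto simp: zero_insertion_def)
  have "zero_insertion l (a # e') (a # e)"
    unfolding zero_insertion_def using i by (intro exI[of _ "Suc i"]) (simp add: insert_zeros_def)
  then show ?case using Suc.IH[OF e'] by (blast intro: relpowp_Suc_I)
qed simp

lemma relpowp_zero_insertion_replicate: "(zero_insertion l ^^ k) d (replicate (k * l) 0 @ d)"
proof (induction k)
  case (Suc k)
  have "zero_insertion l (replicate (k * l) 0 @ d) (replicate (Suc k * l) 0 @ d)"
    unfolding zero_insertion_def
    by (intro exI[of _ 0]) (simp add: insert_zeros_def replicate_add[symmetric] add.commute)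
  then show ?case using Suc.IH by (blast intro: relpowp_Suc_I)
qed simp

lemma replicate_zero_append_Cons_inject:
  assumes "(a :: nat) \<noteq> 0" and "replicate m 0 @ a # e = replicate m' 0 @ a # e'"
  shows "m = m' \<and> e = e'"
proof -
  have "takeWhile (\<lambda>b. b = 0) (replicate k 0 @ a # f) = replicate k 0" for k f
    using assms(1) by (subst takeWhile_append2) auto
  then have "replicate m 0 = replicate m' (0::nat)"
    using arg_cong[OF assms(2), of "takeWhile (\<lambda>b. b = 0)"] by metis
  then show ?thesis using assms(2) by simp
qed

lemma binomial_le_card_relpowp_zero_insertion:
  assumes "l > 0"
  shows "(hamming_weight d + t) choose t \<le> card {e. (zero_insertion l ^^ t) d e}"
proof (induction d arbitrary: t)
  case Nil
  have "replicate (t * l) 0 @ [] \<in> {e. (zero_insertion l ^^ t) [] e}"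
    using relpowp_zero_insertion_replicate by blast
  then have "card {e. (zero_insertion l ^^ t) [] e} \<noteq> 0"
    using finite_relpowp_zero_insertion by (metis card_0_eq empty_iff)
  then show ?case by simp
next
  case (Cons a d)
  let ?E = "\<lambda>s d. {e. (zero_insertion l ^^ s) d e}"
  show ?case
  proof (cases "a = 0")
    case True
    have "card (?E t d) = card (Cons 0 ` ?E t d)" by (simp add: card_image)
    also have "\<dots> \<le> card (?E t (a # d))"
      using True relpowp_zero_insertion_Cons by (intro card_mono finite_relpowp_zero_insertion) auto
    finally show ?thesis using Cons.IH[of t] True by simp
  next
    case False
    \<comment> \<open>s blocks go in front of the nonzero letter a, the other t - s into d\<close>
    define f where "f = (\<lambda>(s, e). replicate (s * l) 0 @ a # e)"
    have "(hamming_weight (a # d) + t) choose t = (\<Sum>s\<le>t. (hamming_weight d + s) choose s)"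
      using False by (simp add: sum_choose_lower)
    also have "\<dots> = (\<Sum>s\<le>t. (hamming_weight d + (t - s)) choose (t - s))"
      by (rule sum.reindex_bij_witness[of _ "\<lambda>s. t - s" "\<lambda>s. t - s"]) auto
    also have "\<dots> \<le> (\<Sum>s\<le>t. card (?E (t - s) d))"
      by (intro sum_mono Cons.IH)
    also have "\<dots> = card (SIGMA s:{..t}. ?E (t - s) d)"
      by (simp add: finite_relpowp_zero_insertion)
    also have "\<dots> = card (f ` (SIGMA s:{..t}. ?E (t - s) d))"
      using assms
      by (intro card_image[symmetric] inj_onI) (auto simp: f_def dest!: replicate_zero_append_Cons_inject[OF False])
    also have "\<dots> \<le> card (?E t (a # d))"
    proof (intro card_mono finite_relpowp_zero_insertion subsetI)
      fix y assume "y \<in> f ` (SIGMA s:{..t}. ?E (t - s) d)"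
      then obtain s e where s: "s \<le> t" and e: "(zero_insertion l ^^ (t - s)) d e"
        and y: "y = replicate (s * l) 0 @ a # e"
        by (auto simp: f_def)
      have "(zero_insertion l ^^ (t - s + s)) (a # d) y"
        unfolding relpowp_add y
        using relpowp_zero_insertion_Cons[OF e] relpowp_zero_insertion_replicate by blast
      then show "y \<in> ?E t (a # d)" using s by simp
    qed
    finally show ?thesis .
  qed
qed

lemma words_eq_lists: "words p n = {x. set x \<subseteq> {..<p} \<and> length x = n}"
  by (auto simp: words_def)

lemma finite_words: "finite (words p n)"
  by (simp add: words_eq_lists finite_lists_length_eq)

lemma card_words: "card (words p n) = p ^ n"
  by (simp add: words_eq_lists card_lists_length_eq)

lemma words_Suc: "words p (Suc n) = (\<lambda>(a, x). a # x) ` ({..<p} \<times> words p n)"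
  by (auto simp: words_def length_Suc_conv)

lemma card_words_hamming_weight:
  assumes "p > 0"
  shows "card {x \<in> words p n. hamming_weight x = w} = (n choose w) * (p - 1) ^ w"
proof (induction n arbitrary: w)
  case 0
  have "{x \<in> words p 0. hamming_weight x = w} = (if w = 0 then {[]} else {})"
    by (auto simp: words_def)
  then show ?case by simp
next
  case (Suc n)
  let ?S = "\<lambda>w. {x \<in> words p n. hamming_weight x = w}"
  have fin: "finite (?S w)" for w
    using finite_words by simp
  have card_zero_part: "card (Cons 0 ` ?S w) = card (?S w)" for w
    by (simp add: card_image)
  show ?case
  proof (cases w)
    case 0
    have "{x \<in> words p (Suc n). hamming_weight x = 0} = Cons 0 ` ?S 0"
      using assms by (auto simp: words_Suc split: if_splits)
    then show ?thesis using Suc.IH[of 0] 0 card_zero_part by simp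
  next
    case (Suc v)
    have split: "{x \<in> words p (Suc n). hamming_weight x = w}
        = Cons 0 ` ?S w \<union> (\<lambda>(a, x). a # x) ` ({1..<p} \<times> ?S v)" (is "?L = ?R")
    proof
      show "?L \<subseteq> ?R"
      proof
        fix x assume "x \<in> ?L"
        then obtain a y where "x = a # y" "a < p" "y \<in> words p n" "hamming_weight (a # y) = w"
          by (auto simp: words_Suc)
        then show "x \<in> ?R" using Suc by (cases "a = 0") force+
      qed
      show "?R \<subseteq> ?L" using assms Suc by (auto simp: words_Suc)
    qed
    have "card ((\<lambda>(a, x). a # x) ` ({1..<p} \<times> ?S v)) = (p - 1) * card (?S v)"
      by (subst card_image) (auto simp: inj_on_def card_cartesian_product)
    then have "card {x \<in> words p (Suc n). hamming_weight x = w} = card (?S w) + (p - 1) * card (?S v)"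
      unfolding split using fin card_zero_part by (subst card_Un_disjoint) auto
    then show ?thesis using Suc.IH[of w] Suc.IH[of v] Suc by (simp add: distrib_left distrib_right mult_ac)
  qed
qed

lemma sub_mod_inject:
  fixes a b c p :: nat
  assumes "a < p" "b < p" "c < p" and "(a + p - c) mod p = (b + p - c) mod p"
  shows "a = b"
  using assms
  by (metis (no_types, opaque_lifting) add_diff_inverse_nat mod_add_right_eq
      mod_add_self2 mod_less order_less_imp_not_less trans_less_add2)

lemma inj_on_take_diff_mod:
  assumes "l > 0"
  shows "inj_on (\<lambda>y. (take l y, diff_mod p l y)) (words p n)"
proof (rule inj_onI)
  fix y y' assume y: "y \<in> words p n" and y': "y' \<in> words p n"
    and eq: "(take l y, diff_mod p l y) = (take l y', diff_mod p l y')"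
  have "y ! k = y' ! k" if "k < n" for k
    using that
  proof (induction k rule: less_induct)
    case (less k)
    show ?case
    proof (cases "k < l")
      case True
      then show ?thesis using eq by (metis nth_take prod.inject)
    next
      case False
      then have "diff_mod p l y ! (k - l) = diff_mod p l y' ! (k - l)" using eq by simp
      then have "(y ! k + p - y ! (k - l)) mod p = (y' ! k + p - y' ! (k - l)) mod p"
        using False less.prems y y' by (simp add: nth_diff_mod words_def)
      moreover have "y ! (k - l) = y' ! (k - l)" using less False assms by simp
      moreover have "y ! k < p" "y' ! k < p" "y ! (k - l) < p"
        using y y' less.prems by (auto simp: words_def)
      ultimately show ?thesis by (metis sub_mod_inject)
    qed
  qed
  then show "y = y'" using y y' by (simp add: words_def nth_equalityI)
qed

lemma power_le_fact_mult_choose: "(m::nat) ^ t \<le> fact t * ((m + t) choose t)"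
proof -
  have "m ^ k * fact m \<le> fact (m + k)" for k
  proof (induction k)
    case (Suc k)
    have "m ^ Suc k * fact m = m * (m ^ k * fact m)" by simp
    also have "\<dots> \<le> (m + Suc k) * fact (m + k)" using Suc by (intro mult_mono) auto
    also have "\<dots> = fact (m + Suc k)" by simp
    finally show ?case .
  qed simp
  moreover have "fact t * fact m * ((m + t) choose t) = (fact (m + t) :: nat)"
    using binomial_fact_lemma[of t "m + t"] by simp
  ultimately have "m ^ t * fact m \<le> fact t * ((m + t) choose t) * fact m"
    by (simp add: mult_ac)
  then show ?thesis by simp
qed

lemma choose_mult_power_le: "k \<le> m \<Longrightarrow> (m choose k) * q ^ k \<le> (q + 1 :: nat) ^ m"
  using member_le_sum[of k "{..m}" "\<lambda>k. (m choose k) * q ^ k"] binomial_ring[of q 1 m] by simp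

lemma sum_choose_shift_power_le:
  "(\<Sum>w\<le>m. ((m + t) choose (w + t)) * q ^ (w + t)) \<le> (q + 1 :: nat) ^ (m + t)"
proof -
  have "(\<Sum>w\<le>m. ((m + t) choose (w + t)) * q ^ (w + t))
      = (\<Sum>j\<in>(\<lambda>w. w + t) ` {..m}. ((m + t) choose j) * q ^ j)"
    by (subst sum.reindex) (auto simp: inj_on_def)
  also have "\<dots> \<le> (\<Sum>j\<le>m + t. ((m + t) choose j) * q ^ j)"
    by (intro sum_mono2) auto
  also have "\<dots> = (q + 1) ^ (m + t)"
    using binomial_ring[of q 1 "m + t"] by simp
  finally show ?thesis .
qed

lemma mult_choose_shift_le:
  fixes a b m w t q :: nat
  assumes "w \<le> m" and "a * ((w + t) choose t) \<le> b * ((m choose w) * q ^ w)"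
  shows "a * ((m + t) choose t) * q ^ t \<le> b * (((m + t) choose (w + t)) * q ^ (w + t))"
proof -
  have subset_of_subset: "((m + t) choose (w + t)) * ((w + t) choose t) = ((m + t) choose t) * (m choose w)"
    using choose_mult[of t "w + t" "m + t"] assms(1) by simp
  have "(a * ((m + t) choose t) * q ^ t) * ((w + t) choose t)
      = (a * ((w + t) choose t)) * ((m + t) choose t) * q ^ t"
    by (simp add: mult_ac)
  also have "\<dots> \<le> b * ((m choose w) * q ^ w) * ((m + t) choose t) * q ^ t"
    using assms(2) by simp
  also have "\<dots> = (b * (((m + t) choose (w + t)) * q ^ (w + t))) * ((w + t) choose t)"
    using subset_of_subset by (simp add: power_add mult_ac)
  finally show ?thesis by simp
qed

lemma card_eq_sum_card_level_sets:
  assumes "finite A" and "\<And>x. x \<in> A \<Longrightarrow> f x \<le> (m :: nat)"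
  shows "card A = (\<Sum>w\<le>m. card {x \<in> A. f x = w})"
proof -
  have "A = (\<Union>w\<le>m. {x \<in> A. f x = w})" using assms(2) by auto
  also have "card \<dots> = (\<Sum>w\<le>m. card {x \<in> A. f x = w})"
    using assms(1) by (intro card_UN_disjoint) auto
  finally show ?thesis .
qed

lemma binomial_le_card_tdup_descendants:
  assumes "l > 0" and "l \<le> length x"
  shows "(hamming_weight (diff_mod p l x) + t) choose t \<le> card {y. (tdup_step l ^^ t) x y}"
proof -
  let ?D = "{y. (tdup_step l ^^ t) x y}"
  have "{e. (zero_insertion l ^^ t) (diff_mod p l x) e} \<subseteq> diff_mod p l ` ?D"
    using relpowp_zero_insertion_lift[OF _ assms(2)] by blast
  then have "card {e. (zero_insertion l ^^ t) (diff_mod p l x) e} \<le> card ?D"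
    using finite_relpowp_tdup_step by (metis card_image_le card_mono finite_imageI order_trans)
  then show ?thesis using binomial_le_card_relpowp_zero_insertion[OF assms(1)] le_trans by blast
qed

lemma card_words_diff_mod_weight_le:
  assumes "p > 0" and "l > 0" and "l \<le> n"
  shows "card {y \<in> words p n. hamming_weight (diff_mod p l y) = w}
    \<le> p ^ l * (((n - l) choose w) * (p - 1) ^ w)"
proof -
  let ?Y = "{y \<in> words p n. hamming_weight (diff_mod p l y) = w}"
  let ?f = "\<lambda>y. (take l y, diff_mod p l y)"
  have "?f ` ?Y \<subseteq> words p l \<times> {d \<in> words p (n - l). hamming_weight d = w}"
    using assms by (auto simp: words_def diff_mod_def dest: in_set_takeD)
  moreover have "inj_on ?f ?Y"
    using inj_on_take_diff_mod[OF assms(2)] by (rule inj_on_subset) auto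
  ultimately have "card ?Y \<le> card (words p l \<times> {d \<in> words p (n - l). hamming_weight d = w})"
    by (intro card_inj_on_le) (auto simp: finite_words)
  also have "\<dots> = p ^ l * (((n - l) choose w) * (p - 1) ^ w)"
    using assms(1) by (simp add: card_cartesian_product card_words card_words_hamming_weight)
  finally show ?thesis .
qed

lemma card_tdc_code_weight_class_le:
  assumes "p > 0" and "l > 0" and "l \<le> n" and code: "tdc_code p n l t C"
  shows "card {c \<in> C. hamming_weight (diff_mod p l c) = w} * ((w + t) choose t)
    \<le> p ^ l * (((n + t * l - l) choose w) * (p - 1) ^ w)"
proof -
  let ?Cw = "{c \<in> C. hamming_weight (diff_mod p l c) = w}"
  let ?D = "\<lambda>c. {y. (tdup_step l ^^ t) c y}"
  let ?Y = "{y \<in> words p (n + t * l). hamming_weight (diff_mod p l y) = w}"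
  have C: "C \<subseteq> words p n" using code by (simp add: tdc_code_def)
  then have "finite C" using finite_words by (rule finite_subset)
  then have fin: "finite ?Cw" by simp
  have D_sub_Y: "?D c \<subseteq> ?Y" if "c \<in> ?Cw" for c
  proof
    fix y assume "y \<in> ?D c"
    then have y: "(tdup_step l ^^ t) c y" by simp
    show "y \<in> ?Y"
      using that C relpowp_tdup_step_words[OF y] relpowp_tdup_step_weight[OF y, where p = p] by auto
  qed
  have disj: "?D c \<inter> ?D c' = {}" if "c \<in> ?Cw" "c' \<in> ?Cw" "c \<noteq> c'" for c c'
  proof -
    have "?D c \<subseteq> tdup_ball l t c" "?D c' \<subseteq> tdup_ball l t c'"
      by (auto simp: tdup_ball_def)
    moreover have "tdup_ball l t c \<inter> tdup_ball l t c' = {}"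
      using code that by (auto simp: tdc_code_def)
    ultimately show ?thesis by blast
  qed
  have "card ?Cw * ((w + t) choose t) = (\<Sum>c\<in>?Cw. (w + t) choose t)" by simp
  also have "\<dots> \<le> (\<Sum>c\<in>?Cw. card (?D c))"
  proof (rule sum_mono)
    fix c assume "c \<in> ?Cw"
    then have "l \<le> length c" and "hamming_weight (diff_mod p l c) = w"
      using C assms(3) by (auto simp: words_def)
    then show "(w + t) choose t \<le> card (?D c)"
      using binomial_le_card_tdup_descendants[OF assms(2)] by metis
  qed
  also have "\<dots> = card (\<Union>c\<in>?Cw. ?D c)"
    using fin finite_relpowp_tdup_step disj by (intro card_UN_disjoint[symmetric]) auto
  also have "\<dots> \<le> card ?Y"
    using D_sub_Y finite_words by (intro card_mono) auto
  also have "\<dots> \<le> p ^ l * (((n + t * l - l) choose w) * (p - 1) ^ w)"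
    using card_words_diff_mod_weight_le[of p l "n + t * l" w] assms(1-3) by simp
  finally show ?thesis .
qed

lemma card_tdc_code_mult_le:
  assumes "p > 0" and "l > 0" and code: "tdc_code p n l t C"
  shows "card C * ((n + t * l - l + t) choose t) * (p - 1) ^ t \<le> p ^ (n + t * l + t)"
proof -
  define m where "m = n + t * l - l"
  define q where "q = p - 1"
  have p: "p = q + 1" using assms(1) by (simp add: q_def)
  have C: "C \<subseteq> words p n" using code by (simp add: tdc_code_def)
  show ?thesis
  proof (cases "l \<le> n")
    case False
    have "card C \<le> p ^ n" using card_mono[OF finite_words C] by (simp add: card_words)
    moreover have "((m + t) choose t) * q ^ t \<le> p ^ (m + t)"
      unfolding p by (rule choose_mult_power_le) simp
    ultimately have "card C * (((m + t) choose t) * q ^ t) \<le> p ^ n * p ^ (m + t)"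
      by (rule mult_le_mono)
    also have "\<dots> \<le> p ^ (n + t * l + t)"
      unfolding power_add[symmetric] using assms(1) False by (intro power_increasing) (auto simp: m_def)
    finally show ?thesis by (simp add: m_def q_def mult_ac)
  next
    case True
    let ?Cw = "\<lambda>w. {c \<in> C. hamming_weight (diff_mod p l c) = w}"
    have "finite C" using C finite_words by (rule finite_subset)
    moreover have "hamming_weight (diff_mod p l c) \<le> m" if "c \<in> C" for c
    proof -
      have "hamming_weight (diff_mod p l c) \<le> length (diff_mod p l c)"
        unfolding hamming_weight_def by (rule length_filter_le)
      also have "\<dots> \<le> m" using that C by (auto simp: words_def m_def)
      finally show ?thesis .
    qed
    ultimately have "card C = (\<Sum>w\<le>m. card (?Cw w))"
      by (rule card_eq_sum_card_level_sets)
    then have "card C * ((m + t) choose t) * q ^ t = (\<Sum>w\<le>m. card (?Cw w) * ((m + t) choose t) * q ^ t)"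
      by (simp add: sum_distrib_right)
    also have "\<dots> \<le> (\<Sum>w\<le>m. p ^ l * (((m + t) choose (w + t)) * q ^ (w + t)))"
      using card_tdc_code_weight_class_le[OF assms(1,2) True code]
      by (intro sum_mono mult_choose_shift_le) (simp_all add: m_def q_def)
    also have "\<dots> \<le> p ^ l * p ^ (m + t)"
      unfolding p sum_distrib_left[symmetric] by (intro mult_le_mono2 sum_choose_shift_power_le)
    also have "\<dots> = p ^ (n + t * l + t)"
      using True by (simp add: m_def flip: power_add)
    finally show ?thesis by (simp add: m_def q_def)
  qed
qed

theorem lemma1:
  fixes p n l t :: nat and C :: "nat list set"
  assumes "p \<ge> 2" and "n > 0" and "l > 0" and "t > 0"
    and "tdc_code p n l t C"
  shows "real (card C) \<le> fact t / (real (n + (t - 1) * l)) ^ t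
           * (real p ^ (n + t * (l + 1)) / (real p - 1) ^ t)"
proof -
  define m where "m = n + (t - 1) * l"
  have m: "n + t * l - l = m" using assms(4) by (cases t) (simp_all add: m_def)
  have "card C * m ^ t * (p - 1) ^ t \<le> card C * (fact t * ((m + t) choose t)) * (p - 1) ^ t"
    using power_le_fact_mult_choose[of m t] by simp
  also have "\<dots> \<le> fact t * p ^ (n + t * l + t)"
    using card_tdc_code_mult_le[OF _ assms(3,5)] assms(1) m by (simp add: mult_ac)
  also have "n + t * l + t = n + t * (l + 1)" by simp
  finally have "card C * m ^ t * (p - 1) ^ t \<le> fact t * p ^ (n + t * (l + 1))" .
  then have "real (card C * m ^ t * (p - 1) ^ t) \<le> real (fact t * p ^ (n + t * (l + 1)))"
    by (simp only: of_nat_le_iff)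
  then have "real (card C) * (real m ^ t * (real p - 1) ^ t) \<le> fact t * real p ^ (n + t * (l + 1))"
    using assms(1) by (simp add: of_nat_diff mult_ac)
  moreover have "real m ^ t * (real p - 1) ^ t > 0"
    using assms(1,2) by (simp add: m_def add_pos_nonneg)
  ultimately have "real (card C) \<le> fact t * real p ^ (n + t * (l + 1)) / (real m ^ t * (real p - 1) ^ t)"
    by (simp add: pos_le_divide_eq)
  then show ?thesis by (simp add: m_def)
qed

end
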